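(* Let $a$ and $b$ be coprime positive integers, and put $N = a\left\lfloor \frac{b}{2}\right\rfloor + b\left\lfloor \frac{a}{2}\right\rfloor$. Let $R(a,b)$ be the set of integers $n$ with $0 \le n \le N$ such that $n = ax+by$ for some nonnegative integers $x,y$, and let $\mathrm{NR}(a,b)$ be the set of nonnegative integers that cannot be written as $ax+by$ with $x,y$ nonnegative integers. Then \[ R(a,b) = \left\{ai+bj : 0 \le i \le \Big\lfloor \frac{b}{2}\Big\rfloor,\ 0 \le j \le \Big\lfloor \frac{a}{2}\Big\rfloor \right\} \cup \left\{ N - |ai-bj| : 1 \le i \le \Big\lfloor \frac{b}{2}\Big\rfloor,\ 1 \le j \le \Big\lfloor \frac{a}{2}\Big\rfloor \right\}, \] and \[ \mathrm{NR}(a,b) = \{0,1,2,\dots,N\} \setminus R(a,b). \]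
   Context: A nonnegative integer is called representable (with respect to $a,b$) if it equals $ax+by$ for some nonnegative integers $x$ and $y$, and nonrepresentable otherwise. $\lfloor \cdot \rfloor$ denotes the floor function. *)

theory Defs
  imports Complex_Main
begin

definition representable :: "int \<Rightarrow> int \<Rightarrow> int \<Rightarrow> bool" where
  "representable a b n \<longleftrightarrow> (\<exists>x y. x \<ge> 0 \<and> y \<ge> 0 \<and> n = a * x + b * y)"

definition Rset :: "int \<Rightarrow> int \<Rightarrow> int set" where
  "Rset a b = {n. 0 \<le> n \<and> n \<le> a * \<lfloor>real_of_int b / 2\<rfloor> + b * \<lfloor>real_of_int a / 2\<rfloor> \<and> representable a b n}"

definition NRset :: "int \<Rightarrow> int \<Rightarrow> int set" where
  "NRset a b = {n. 0 \<le> n \<and> \<not> representable a b n}"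

end

theory Submission
  imports Defs
begin

text \<open>Write \<open>A = a div 2\<close>, \<open>B = b div 2\<close> and \<open>N = a B + b A\<close>. A representation
  \<open>n = a x + b y \<le> N\<close> with \<open>x \<le> B\<close> and \<open>y \<le> A\<close> lies in the first set. Otherwise one
  coordinate overshoots, say \<open>x = B + i\<close> with \<open>i \<ge> 1\<close>; then \<open>y = A - j\<close> and
  \<open>n = N - (b j - a i)\<close> with \<open>a i \<le> b j \<le> b A \<le> a b / 2\<close>, which forces \<open>i \<le> B\<close>.
  Conversely \<open>N - \<bar>a i - b j\<bar>\<close> equals \<open>a (B - i) + b (A + j)\<close> or \<open>a (B + i) + b (A - j)\<close>.
  Finally \<open>2 N \<ge> 2 a b - a - b\<close>, so \<open>N\<close> exceeds the Frobenius number \<open>a b - a - b\<close>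
  and every nonrepresentable number is at most \<open>N\<close>.\<close>

lemma floor_half_eq_div: "\<lfloor>real_of_int b / 2\<rfloor> = b div 2"
  using floor_divide_of_int_eq[of b 2] by simp

lemma representable_nonneg:
  assumes "a \<ge> 0" "b \<ge> 0" "representable a b n"
  shows "n \<ge> 0"
  using assms unfolding representable_def by auto

lemma representable_gt_Frobenius_number:
  fixes a b n :: int
  assumes "a > 0" "b > 0" "coprime a b" "n > a * b - a - b"
  shows "representable a b n"
proof -
  obtain u v where uv: "u * a + v * b = 1"
    using bezout_int[of a b] assms(3) by auto
  define q where "q = (n * u) div b"
  define x where "x = n * u - b * q"
  define y where "y = n * v + a * q"
  have "x = (n * u) mod b"
    unfolding x_def q_def by (simp add: minus_mult_div_eq_mod)
  then have x_bounds: "0 \<le> x" "x \<le> b - 1"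
    using assms(2) by auto
  have "a * x + b * y = n * (u * a + v * b)"
    unfolding x_def y_def by (simp add: algebra_simps)
  then have n_eq: "n = a * x + b * y"
    using uv by simp
  have "a * x \<le> a * (b - 1)"
    using x_bounds assms(1) by simp
  then have "b * y > b * (-1)"
    using n_eq assms(4) by (simp add: algebra_simps)
  then have "y > -1"
    using assms(2) mult_less_cancel_left_pos by blast
  then show ?thesis
    unfolding representable_def using x_bounds n_eq by (intro exI[of _ x] exI[of _ y]) auto
qed

lemma Frobenius_number_lt_half_box:
  fixes a b :: int
  assumes "a > 0" "b > 0"
  shows "a * b - a - b < a * (b div 2) + b * (a div 2)"
proof -
  have "a * (b - 1) \<le> a * (2 * (b div 2))" "b * (a - 1) \<le> b * (2 * (a div 2))"
    using assms by simp_all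
  then show ?thesis
    using assms by (simp add: algebra_simps)
qed

lemma representable_reflection:
  fixes a b i j A B :: int
  assumes "0 \<le> i" "i \<le> B" "0 \<le> j" "j \<le> A"
  shows "representable a b (a * B + b * A - \<bar>a * i - b * j\<bar>)"
proof (cases "b * j \<le> a * i")
  case True
  then have "a * B + b * A - \<bar>a * i - b * j\<bar> = a * (B - i) + b * (A + j)"
    by (simp add: algebra_simps)
  then show ?thesis
    unfolding representable_def using assms by (intro exI[of _ "B - i"] exI[of _ "A + j"]) auto
next
  case False
  then have "a * B + b * A - \<bar>a * i - b * j\<bar> = a * (B + i) + b * (A - j)"
    by (simp add: algebra_simps)
  then show ?thesis
    unfolding representable_def using assms by (intro exI[of _ "B + i"] exI[of _ "A - j"]) auto
qed

lemma overshooting_representation_reflects: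
  fixes a b x y :: int
  assumes "a > 0" "b > 0" "0 \<le> y" "b div 2 < x"
    and below: "a * x + b * y \<le> a * (b div 2) + b * (a div 2)"
  obtains i j where "1 \<le> i" "i \<le> b div 2" "1 \<le> j" "j \<le> a div 2"
    "a * x + b * y = a * (b div 2) + b * (a div 2) - \<bar>a * i - b * j\<bar>"
proof -
  define i where "i = x - b div 2"
  define j where "j = a div 2 - y"
  have reflected: "a * i \<le> b * j"
    using below unfolding i_def j_def by (simp add: algebra_simps)
  have "1 \<le> i" "j \<le> a div 2"
    using assms(3,4) unfolding i_def j_def by simp_all
  then have "0 < b * j"
    using reflected assms(1) by (smt (verit) mult_pos_pos)
  then have "1 \<le> j"
    using assms(2) by (simp add: zero_less_mult_iff)
  have "a * (2 * i) \<le> a * b"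
  proof -
    have "2 * (a * i) \<le> b * (2 * j)"
      using reflected by simp
    also have "\<dots> \<le> b * a"
      using \<open>j \<le> a div 2\<close> assms(2) by simp
    finally show ?thesis
      by (simp add: algebra_simps)
  qed
  then have "i \<le> b div 2"
    using assms(1) by simp
  moreover have "a * x + b * y = a * (b div 2) + b * (a div 2) - \<bar>a * i - b * j\<bar>"
    using reflected unfolding i_def j_def by (simp add: algebra_simps)
  ultimately show ?thesis
    using that \<open>1 \<le> i\<close> \<open>1 \<le> j\<close> \<open>j \<le> a div 2\<close> by blast
qed

lemma Rset_eq_le_half_box:
  "Rset a b = {n. 0 \<le> n \<and> n \<le> a * (b div 2) + b * (a div 2) \<and> representable a b n}"
  unfolding Rset_def floor_half_eq_div ..

lemma Rset_subset_half_box_union: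
  fixes a b :: int
  assumes "a > 0" "b > 0"
  shows "Rset a b \<subseteq>
    {a * i + b * j | i j. 0 \<le> i \<and> i \<le> b div 2 \<and> 0 \<le> j \<and> j \<le> a div 2} \<union>
    {a * (b div 2) + b * (a div 2) - \<bar>a * i - b * j\<bar> | i j.
       1 \<le> i \<and> i \<le> b div 2 \<and> 1 \<le> j \<and> j \<le> a div 2}"
    (is "_ \<subseteq> ?box \<union> ?reflected")
proof
  fix n
  assume "n \<in> Rset a b"
  then obtain x y where xy: "0 \<le> x" "0 \<le> y" "n = a * x + b * y"
    and below: "a * x + b * y \<le> a * (b div 2) + b * (a div 2)"
    unfolding Rset_eq_le_half_box representable_def by blast
  consider "x \<le> b div 2" "y \<le> a div 2" | "b div 2 < x" | "a div 2 < y"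
    by linarith
  then show "n \<in> ?box \<union> ?reflected"
  proof cases
    case 1
    with xy show ?thesis
      by blast
  next
    case 2
    with overshooting_representation_reflects[OF assms xy(2) _ below] xy(3) show ?thesis
      by blast
  next
    case 3
    from below have "b * y + a * x \<le> b * (a div 2) + a * (b div 2)"
      by simp
    with overshooting_representation_reflects[OF assms(2,1) xy(1) 3] obtain i j
      where "1 \<le> i" "i \<le> a div 2" "1 \<le> j" "j \<le> b div 2"
        and "b * y + a * x = b * (a div 2) + a * (b div 2) - \<bar>b * i - a * j\<bar>"
      by blast
    moreover from this(5)
    have "n = a * (b div 2) + b * (a div 2) - \<bar>a * j - b * i\<bar>"
      using xy(3) by (simp add: abs_minus_commute add.commute)
    ultimately show ?thesis
      by blast
  qed
qed

lemma half_box_subset_Rset: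
  fixes a b :: int
  assumes "a > 0" "b > 0"
  shows "{a * i + b * j | i j. 0 \<le> i \<and> i \<le> b div 2 \<and> 0 \<le> j \<and> j \<le> a div 2} \<subseteq> Rset a b"
proof
  fix n
  assume "n \<in> {a * i + b * j | i j. 0 \<le> i \<and> i \<le> b div 2 \<and> 0 \<le> j \<and> j \<le> a div 2}"
  then obtain i j where ij: "n = a * i + b * j" "0 \<le> i" "i \<le> b div 2" "0 \<le> j" "j \<le> a div 2"
    by blast
  then have "a * i \<le> a * (b div 2)" "b * j \<le> b * (a div 2)" "0 \<le> n"
    using assms by simp_all
  with ij show "n \<in> Rset a b"
    unfolding Rset_eq_le_half_box representable_def by auto
qed

lemma reflected_half_box_subset_Rset:
  fixes a b :: int
  assumes "a > 0" "b > 0"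
  shows "{a * (b div 2) + b * (a div 2) - \<bar>a * i - b * j\<bar> | i j.
      1 \<le> i \<and> i \<le> b div 2 \<and> 1 \<le> j \<and> j \<le> a div 2} \<subseteq> Rset a b"
proof
  fix n
  assume "n \<in> {a * (b div 2) + b * (a div 2) - \<bar>a * i - b * j\<bar> | i j.
      1 \<le> i \<and> i \<le> b div 2 \<and> 1 \<le> j \<and> j \<le> a div 2}"
  then obtain i j where ij: "n = a * (b div 2) + b * (a div 2) - \<bar>a * i - b * j\<bar>"
      "1 \<le> i" "i \<le> b div 2" "1 \<le> j" "j \<le> a div 2"
    by blast
  then have "representable a b n"
    using representable_reflection[of i "b div 2" j "a div 2" a b] by simp
  with ij(1) show "n \<in> Rset a b"
    unfolding Rset_eq_le_half_box using representable_nonneg[of a b n] assms by simp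
qed

lemma NRset_eq_half_box_diff_Rset:
  fixes a b :: int
  assumes "a > 0" "b > 0" "coprime a b"
  shows "NRset a b = {0..a * (b div 2) + b * (a div 2)} - Rset a b"
proof -
  have "n \<le> a * (b div 2) + b * (a div 2)" if "\<not> representable a b n" for n
    using that representable_gt_Frobenius_number[OF assms, of n]
      Frobenius_number_lt_half_box[OF assms(1,2)]
    by (meson not_le less_trans)
  then show ?thesis
    unfolding NRset_def Rset_eq_le_half_box by auto
qed

theorem theorem4:
  fixes a b :: int
  assumes "a > 0" and "b > 0" and "coprime a b"
  defines "N \<equiv> a * \<lfloor>real_of_int b / 2\<rfloor> + b * \<lfloor>real_of_int a / 2\<rfloor>"
  shows "(Rset a b =
           {a * i + b * j | i j. 0 \<le> i \<and> i \<le> \<lfloor>real_of_int b / 2\<rfloor> \<and> 0 \<le> j \<and> j \<le> \<lfloor>real_of_int a / 2\<rfloor>}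
         \<union> {N - \<bar>a * i - b * j\<bar> | i j. 1 \<le> i \<and> i \<le> \<lfloor>real_of_int b / 2\<rfloor> \<and> 1 \<le> j \<and> j \<le> \<lfloor>real_of_int a / 2\<rfloor>})
         \<and> NRset a b = {0..N} - Rset a b"
  unfolding N_def floor_half_eq_div
  using Rset_subset_half_box_union[OF assms(1,2)] half_box_subset_Rset[OF assms(1,2)]
    reflected_half_box_subset_Rset[OF assms(1,2)] NRset_eq_half_box_diff_Rset[OF assms(1-3)]
  by blast

end
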